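(* Let $(X,\Sigma)$ be a measurable space, $p$ a transition function on it with associated operator $A$ on $ba(X,\Sigma)$, and let $K=\{\mu_1,\dots,\mu_m\}$ be a finitely additive cycle of measures of $A$. If at least one cyclic measure $\mu_i$ is countably additive, then all cyclic measures $\mu_1,\dots,\mu_m$ and the mean measure $\frac1m\sum_{k=1}^m\mu_k$ are countably additive.
   Context: $X$ is an arbitrary infinite set and $\Sigma$ a $\sigma$-algebra of subsets of $X$ containing all one-point sets. $ba(X,\Sigma)$ denotes the space of bounded finitely additive real-valued measures on $\Sigma$. A transition function is a map $p(x,E)$, $x\in X$, $E\in\Sigma$, with $0\le p(x,E)\le 1$, $p(x,X)=1$, $p(\cdot,E)$ bounded $\Sigma$-measurable for every $E$, and $p(x,\cdot)$ countably additive for every $x$. The Markov operator is $A\mu(E)=\int_X p(x,E)\,\mu(dx)$ for $\mu\in ba(X,\Sigma)$. A cycle of measures of $A$ is a finite numbered set $K=\{\mu_1,\dots,\mu_m\}$ of pairwise different positive finitely additive measures with $A\mu_i=\mu_{i+1}$ ($1\le i\le m-1$) and $A\mu_m=\mu_1$; its mean measure is $\frac1m\sum_{k=1}^m\mu_k$. *)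

theory Defs
  imports "HOL-Analysis.Analysis"
begin

text \<open>Measures are real-valued set functions; only their values on \<Sigma> matter.\<close>

definition fin_add_measure :: "'a set \<Rightarrow> 'a set set \<Rightarrow> ('a set \<Rightarrow> real) \<Rightarrow> bool" where
  "fin_add_measure X \<Sigma> \<mu> \<longleftrightarrow>
     (\<forall>E\<in>\<Sigma>. \<forall>F\<in>\<Sigma>. E \<inter> F = {} \<longrightarrow> \<mu> (E \<union> F) = \<mu> E + \<mu> F)"

definition ba_measure :: "'a set \<Rightarrow> 'a set set \<Rightarrow> ('a set \<Rightarrow> real) \<Rightarrow> bool" where
  "ba_measure X \<Sigma> \<mu> \<longleftrightarrow> fin_add_measure X \<Sigma> \<mu> \<and> (\<exists>B. \<forall>E\<in>\<Sigma>. \<bar>\<mu> E\<bar> \<le> B)"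

definition positive_measure :: "'a set set \<Rightarrow> ('a set \<Rightarrow> real) \<Rightarrow> bool" where
  "positive_measure \<Sigma> \<mu> \<longleftrightarrow> (\<forall>E\<in>\<Sigma>. 0 \<le> \<mu> E)"

definition countably_additive_measure :: "'a set set \<Rightarrow> ('a set \<Rightarrow> real) \<Rightarrow> bool" where
  "countably_additive_measure \<Sigma> \<mu> \<longleftrightarrow>
     (\<forall>F::nat \<Rightarrow> 'a set. range F \<subseteq> \<Sigma> \<longrightarrow> disjoint_family F \<longrightarrow>
        (\<lambda>n. \<mu> (F n)) sums \<mu> (\<Union>n. F n))"

definition meas_partition :: "'a set \<Rightarrow> 'a set set \<Rightarrow> 'a set set \<Rightarrow> bool" where
  "meas_partition X \<Sigma> P \<longleftrightarrow> finite P \<and> P \<subseteq> \<Sigma> \<and> {} \<notin> P \<and> \<Union>P = X \<and>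
     (\<forall>E\<in>P. \<forall>F\<in>P. E \<noteq> F \<longrightarrow> E \<inter> F = {})"

text \<open>Integral of a bounded measurable function with respect to a bounded finitely
  additive measure: limit of Riemann-type sums over finite measurable partitions on whose
  cells the oscillation of f is small.\<close>
definition ba_integral :: "'a set \<Rightarrow> 'a set set \<Rightarrow> ('a set \<Rightarrow> real) \<Rightarrow> ('a \<Rightarrow> real) \<Rightarrow> real" where
  "ba_integral X \<Sigma> \<mu> f = (THE I. \<forall>\<epsilon>>0. \<exists>\<delta>>0. \<forall>P t.
      meas_partition X \<Sigma> P \<longrightarrow> (\<forall>E\<in>P. t E \<in> E) \<longrightarrow>
      (\<forall>E\<in>P. \<forall>x\<in>E. \<forall>y\<in>E. \<bar>f x - f y\<bar> < \<delta>) \<longrightarrow>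
      \<bar>(\<Sum>E\<in>P. f (t E) * \<mu> E) - I\<bar> < \<epsilon>)"

definition transition_function :: "'a set \<Rightarrow> 'a set set \<Rightarrow> ('a \<Rightarrow> 'a set \<Rightarrow> real) \<Rightarrow> bool" where
  "transition_function X \<Sigma> p \<longleftrightarrow>
     (\<forall>x\<in>X. \<forall>E\<in>\<Sigma>. 0 \<le> p x E \<and> p x E \<le> 1) \<and>
     (\<forall>x\<in>X. p x X = 1) \<and>
     (\<forall>E\<in>\<Sigma>. \<forall>a::real. {x\<in>X. p x E \<le> a} \<in> \<Sigma>) \<and>
     (\<forall>x\<in>X. countably_additive_measure \<Sigma> (p x))"

definition markov_op :: "'a set \<Rightarrow> 'a set set \<Rightarrow> ('a \<Rightarrow> 'a set \<Rightarrow> real) \<Rightarrow> ('a set \<Rightarrow> real) \<Rightarrow> ('a set \<Rightarrow> real)" where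
  "markov_op X \<Sigma> p \<mu> = (\<lambda>E. ba_integral X \<Sigma> \<mu> (\<lambda>x. p x E))"

definition meas_eq :: "'a set set \<Rightarrow> ('a set \<Rightarrow> real) \<Rightarrow> ('a set \<Rightarrow> real) \<Rightarrow> bool" where
  "meas_eq \<Sigma> \<mu> \<nu> \<longleftrightarrow> (\<forall>E\<in>\<Sigma>. \<mu> E = \<nu> E)"

definition measure_cycle :: "'a set \<Rightarrow> 'a set set \<Rightarrow> ('a \<Rightarrow> 'a set \<Rightarrow> real) \<Rightarrow> nat \<Rightarrow> (nat \<Rightarrow> 'a set \<Rightarrow> real) \<Rightarrow> bool" where
  "measure_cycle X \<Sigma> p m \<mu> \<longleftrightarrow> 1 \<le> m \<and>
     (\<forall>i\<in>{1..m}. ba_measure X \<Sigma> (\<mu> i) \<and> positive_measure \<Sigma> (\<mu> i)) \<and>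
     (\<forall>i\<in>{1..m}. \<forall>j\<in>{1..m}. i \<noteq> j \<longrightarrow> \<not> meas_eq \<Sigma> (\<mu> i) (\<mu> j)) \<and>
     (\<forall>i\<in>{1..<m}. meas_eq \<Sigma> (markov_op X \<Sigma> p (\<mu> i)) (\<mu> (Suc i))) \<and>
     meas_eq \<Sigma> (markov_op X \<Sigma> p (\<mu> m)) (\<mu> 1)"

definition mean_measure :: "nat \<Rightarrow> (nat \<Rightarrow> 'a set \<Rightarrow> real) \<Rightarrow> 'a set \<Rightarrow> real" where
  "mean_measure m \<mu> = (\<lambda>E. (\<Sum>k=1..m. \<mu> k E) / real m)"

end

(*
  A positive, countably additive mu in ba(X, Sigma) is an honest finite measure, and for such
  a measure the Riemann-type integral defining the operator A agrees with the Lebesgue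
  integral: fine partitions exist for every bounded measurable integrand, so the limit is
  unique, and the Lebesgue integral is such a limit.  Hence A mu (E) = integral of p(x, E)
  dmu(x), and dominated convergence (with p(x, -) countably additive and bounded by 1)
  makes A mu countably additive again.  Along the cycle A maps mu_i to mu_(i+1) and mu_m to
  mu_1, so countable additivity of one mu_i spreads to all of them, and the mean measure is
  a finite linear combination of them.
*)
theory Submission
  imports Defs
begin

definition fine_tagged_partition ::
    "'a set \<Rightarrow> 'a set set \<Rightarrow> ('a \<Rightarrow> real) \<Rightarrow> real \<Rightarrow> 'a set set \<Rightarrow> ('a set \<Rightarrow> 'a) \<Rightarrow> bool" where
  "fine_tagged_partition X \<Sigma> f \<delta> P t \<longleftrightarrow> meas_partition X \<Sigma> P \<and> (\<forall>E\<in>P. t E \<in> E) \<and>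
     (\<forall>E\<in>P. \<forall>x\<in>E. \<forall>y\<in>E. \<bar>f x - f y\<bar> < \<delta>)"

definition has_ba_integral :: "'a set \<Rightarrow> 'a set set \<Rightarrow> ('a set \<Rightarrow> real) \<Rightarrow> ('a \<Rightarrow> real) \<Rightarrow> real \<Rightarrow> bool" where
  "has_ba_integral X \<Sigma> \<mu> f I \<longleftrightarrow> (\<forall>\<epsilon>>0. \<exists>\<delta>>0. \<forall>P t. fine_tagged_partition X \<Sigma> f \<delta> P t \<longrightarrow>
     \<bar>(\<Sum>E\<in>P. f (t E) * \<mu> E) - I\<bar> < \<epsilon>)"

lemma ba_integral_eq_The: "ba_integral X \<Sigma> \<mu> f = (THE I. has_ba_integral X \<Sigma> \<mu> f I)"
  by (simp add: ba_integral_def has_ba_integral_def fine_tagged_partition_def imp_conjL)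

lemma fine_tagged_partition_exists:
  fixes f :: "'a \<Rightarrow> real"
  assumes f: "f \<in> borel_measurable M" and bounded: "\<And>x. x \<in> space M \<Longrightarrow> \<bar>f x\<bar> \<le> B"
    and "\<delta> > 0"
  shows "\<exists>P t. fine_tagged_partition (space M) (sets M) f \<delta> P t"
proof -
  define level where "level x = \<lfloor>f x / \<delta>\<rfloor>" for x
  define cell where "cell k = {x \<in> space M. level x = k}" for k
  define P where "P = cell ` level ` space M"
  have "level x \<in> {\<lfloor>-B / \<delta>\<rfloor>..\<lfloor>B / \<delta>\<rfloor>}" if "x \<in> space M" for x
    using bounded[OF that] \<open>\<delta> > 0\<close> unfolding level_def
    by (auto intro!: floor_mono simp: abs_le_iff field_simps)
  then have finite: "finite P"
    unfolding P_def by (meson finite_atLeastAtMost_int finite_imageI finite_subset image_subsetI)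
  have "cell k \<in> sets M" for k
    unfolding cell_def level_def using f by measurable
  then have measurable: "P \<subseteq> sets M"
    unfolding P_def by blast
  have nonempty: "{} \<notin> P" and cover: "\<Union>P = space M"
    unfolding P_def cell_def by auto
  have tagged: "(SOME x. x \<in> E) \<in> E" if "E \<in> P" for E
    using nonempty that by (metis ex_in_conv someI_ex)
  have disjoint: "E \<inter> F = {}" if "E \<in> P" "F \<in> P" "E \<noteq> F" for E F
    using that unfolding P_def cell_def by auto
  have oscillation: "\<bar>f x - f y\<bar> < \<delta>" if "E \<in> P" "x \<in> E" "y \<in> E" for E x y
  proof -
    have "level x = level y"
      using that unfolding P_def cell_def by auto
    then have "\<bar>f x / \<delta> - f y / \<delta>\<bar> < 1"
      unfolding level_def by linarith
    then show ?thesis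
      using \<open>\<delta> > 0\<close> by (simp add: diff_divide_distrib[symmetric] abs_divide)
  qed
  have "fine_tagged_partition (space M) (sets M) f \<delta> P (\<lambda>E. SOME x. x \<in> E)"
    unfolding fine_tagged_partition_def meas_partition_def
    using finite measurable nonempty cover tagged disjoint oscillation by blast
  then show ?thesis by blast
qed

lemma has_ba_integral_unique:
  assumes fine: "\<And>\<delta>. \<delta> > 0 \<Longrightarrow> \<exists>P t. fine_tagged_partition X \<Sigma> f \<delta> P t"
    and I: "has_ba_integral X \<Sigma> \<mu> f I" and J: "has_ba_integral X \<Sigma> \<mu> f J"
  shows "I = J"
proof (rule ccontr)
  assume "I \<noteq> J"
  then have \<epsilon>: "\<bar>I - J\<bar> / 2 > 0" by simp
  obtain \<delta>\<^sub>I where "\<delta>\<^sub>I > 0" and \<delta>\<^sub>I: "\<And>P t. fine_tagged_partition X \<Sigma> f \<delta>\<^sub>I P t \<Longrightarrow>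
      \<bar>(\<Sum>E\<in>P. f (t E) * \<mu> E) - I\<bar> < \<bar>I - J\<bar> / 2"
    using I \<epsilon> unfolding has_ba_integral_def by blast
  obtain \<delta>\<^sub>J where "\<delta>\<^sub>J > 0" and \<delta>\<^sub>J: "\<And>P t. fine_tagged_partition X \<Sigma> f \<delta>\<^sub>J P t \<Longrightarrow>
      \<bar>(\<Sum>E\<in>P. f (t E) * \<mu> E) - J\<bar> < \<bar>I - J\<bar> / 2"
    using J \<epsilon> unfolding has_ba_integral_def by blast
  obtain P t where "fine_tagged_partition X \<Sigma> f (min \<delta>\<^sub>I \<delta>\<^sub>J) P t"
    using fine \<open>\<delta>\<^sub>I > 0\<close> \<open>\<delta>\<^sub>J > 0\<close> by (meson min_less_iff_conj)
  then have fine_IJ: "fine_tagged_partition X \<Sigma> f \<delta>\<^sub>I P t" "fine_tagged_partition X \<Sigma> f \<delta>\<^sub>J P t"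
    unfolding fine_tagged_partition_def by auto
  define S where "S = (\<Sum>E\<in>P. f (t E) * \<mu> E)"
  have "\<bar>S - I\<bar> < \<bar>I - J\<bar> / 2" "\<bar>S - J\<bar> < \<bar>I - J\<bar> / 2"
    unfolding S_def using \<delta>\<^sub>I \<delta>\<^sub>J fine_IJ by blast+
  moreover have "\<bar>I - J\<bar> \<le> \<bar>S - I\<bar> + \<bar>S - J\<bar>"
    using abs_triangle_ineq4[of "S - J" "S - I"] by simp
  ultimately show False by argo
qed

lemma ba_integral_eqI:
  assumes "\<And>\<delta>. \<delta> > 0 \<Longrightarrow> \<exists>P t. fine_tagged_partition X \<Sigma> f \<delta> P t"
    and "has_ba_integral X \<Sigma> \<mu> f I"
  shows "ba_integral X \<Sigma> \<mu> f = I"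
  unfolding ba_integral_eq_The
proof (rule the_equality)
  show "has_ba_integral X \<Sigma> \<mu> f I" by fact
  show "J = I" if "has_ba_integral X \<Sigma> \<mu> f J" for J
    using has_ba_integral_unique[OF assms(1) that assms(2)] .
qed

lemma tagged_sum_integral_dist:
  fixes f :: "'a \<Rightarrow> real"
  assumes "finite_measure M" and f: "f \<in> borel_measurable M"
    and bounded: "\<And>x. x \<in> space M \<Longrightarrow> \<bar>f x\<bar> \<le> B"
    and fine: "fine_tagged_partition (space M) (sets M) f \<delta> P t"
  shows "\<bar>(\<Sum>E\<in>P. f (t E) * measure M E) - integral\<^sup>L M f\<bar> \<le> \<delta> * measure M (space M)"
proof -
  interpret finite_measure M by fact
  have "finite P" and P: "P \<subseteq> sets M" and "\<Union>P = space M"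
    and disj: "\<And>E F. E \<in> P \<Longrightarrow> F \<in> P \<Longrightarrow> E \<noteq> F \<Longrightarrow> E \<inter> F = {}"
    and tag: "\<And>E. E \<in> P \<Longrightarrow> t E \<in> E"
    and osc: "\<And>E x y. E \<in> P \<Longrightarrow> x \<in> E \<Longrightarrow> y \<in> E \<Longrightarrow> \<bar>f x - f y\<bar> < \<delta>"
    using fine by (simp_all add: fine_tagged_partition_def meas_partition_def)
  define step where "step x = (\<Sum>E\<in>P. f (t E) * indicator E x)" for x
  have integrable_cell: "integrable M (\<lambda>x. f (t E) * indicator E x)" if "E \<in> P" for E
    using that P
    by (intro integrable_mult_right integrable_real_indicator) (auto simp: less_top[symmetric])
  then have integrable_step: "integrable M step"
    unfolding step_def
    by (rule Bochner_Integration.integrable_sum[where f = "\<lambda>E x. f (t E) * indicator E x"])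
  have integrable_f: "integrable M f"
    using f bounded by (intro integrable_const_bound[where B = B] AE_I2) auto
  have "integral\<^sup>L M step = (\<Sum>E\<in>P. integral\<^sup>L M (\<lambda>x. f (t E) * indicator E x))"
    unfolding step_def using integrable_cell
    by (rule Bochner_Integration.integral_sum[where f = "\<lambda>E x. f (t E) * indicator E x"])
  also have "\<dots> = (\<Sum>E\<in>P. f (t E) * measure M E)"
    using P sets.sets_into_space by (intro sum.cong) (auto simp: Int_absorb2)
  finally have integral_step: "integral\<^sup>L M step = (\<Sum>E\<in>P. f (t E) * measure M E)" .
  have step_close: "\<bar>step x - f x\<bar> \<le> \<delta>" if "x \<in> space M" for x
  proof -
    from that \<open>\<Union>P = space M\<close> obtain E where E: "E \<in> P" "x \<in> E" by auto
    have "step x = f (t E) * indicator E x + (\<Sum>F\<in>P - {E}. f (t F) * indicator F x)"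
      unfolding step_def using \<open>finite P\<close> E(1) by (rule sum.remove)
    also have "(\<Sum>F\<in>P - {E}. f (t F) * indicator F x) = 0"
      using disj E by (intro sum.neutral) (fastforce simp: indicator_def)
    finally have "step x = f (t E)"
      using E(2) by simp
    then show ?thesis
      using osc[OF E(1) tag[OF E(1)] E(2)] by simp
  qed
  have "\<bar>integral\<^sup>L M step - integral\<^sup>L M f\<bar> = \<bar>integral\<^sup>L M (\<lambda>x. step x - f x)\<bar>"
    using integrable_step integrable_f by simp
  also have "\<dots> \<le> integral\<^sup>L M (\<lambda>x. \<bar>step x - f x\<bar>)"
    by (rule integral_abs_bound)
  also have "\<dots> \<le> integral\<^sup>L M (\<lambda>x. \<delta>)"
    using step_close integrable_step integrable_f
    by (intro integral_mono integrable_abs Bochner_Integration.integrable_diff) auto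
  also have "\<dots> = \<delta> * measure M (space M)"
    by simp
  finally show ?thesis
    unfolding integral_step .
qed

definition real_measure :: "'a set \<Rightarrow> 'a set set \<Rightarrow> ('a set \<Rightarrow> real) \<Rightarrow> 'a measure" where
  "real_measure X \<Sigma> \<mu> = measure_of X \<Sigma> (\<lambda>E. ennreal (\<mu> E))"

lemma
  assumes "sigma_algebra X \<Sigma>"
  shows space_real_measure: "space (real_measure X \<Sigma> \<mu>) = X"
    and sets_real_measure: "sets (real_measure X \<Sigma> \<mu>) = \<Sigma>"
proof -
  interpret sigma_algebra X \<Sigma> by fact
  show "space (real_measure X \<Sigma> \<mu>) = X" "sets (real_measure X \<Sigma> \<mu>) = \<Sigma>"
    using space_closed unfolding real_measure_def by (simp_all add: space_measure_of_conv)
qed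

lemma countably_additive_measure_empty:
  assumes "{} \<in> \<Sigma>" and "countably_additive_measure \<Sigma> \<mu>"
  shows "\<mu> {} = 0"
proof -
  have "(\<lambda>n. \<mu> {}) sums \<mu> {}"
    using assms unfolding countably_additive_measure_def
    by (auto simp: disjoint_family_on_def dest: spec[of _ "\<lambda>_. {}"])
  then show ?thesis
    by (simp add: sums_iff summable_const_iff)
qed

lemma emeasure_real_measure:
  assumes "sigma_algebra X \<Sigma>" and "positive_measure \<Sigma> \<mu>" and "countably_additive_measure \<Sigma> \<mu>"
    and "E \<in> \<Sigma>"
  shows "emeasure (real_measure X \<Sigma> \<mu>) E = ennreal (\<mu> E)"
  unfolding real_measure_def
proof (rule emeasure_measure_of_sigma[OF assms(1) _ _ assms(4)])
  show "positive \<Sigma> (\<lambda>E. ennreal (\<mu> E))"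
    using countably_additive_measure_empty[OF _ assms(3)] assms(1)
    unfolding positive_def by (simp add: sigma_algebra_iff2)
  show "countably_additive \<Sigma> (\<lambda>E. ennreal (\<mu> E))"
    unfolding countably_additive_def
  proof (intro allI impI)
    fix F :: "nat \<Rightarrow> 'a set" assume "range F \<subseteq> \<Sigma>" "disjoint_family F"
    then have "(\<lambda>n. \<mu> (F n)) sums \<mu> (\<Union>n. F n)"
      using assms(3) unfolding countably_additive_measure_def by blast
    moreover have "\<And>n. 0 \<le> \<mu> (F n)"
      using assms(2) \<open>range F \<subseteq> \<Sigma>\<close> unfolding positive_measure_def by blast
    ultimately show "(\<Sum>n. ennreal (\<mu> (F n))) = ennreal (\<mu> (\<Union>n. F n))"
      by (simp add: suminf_ennreal2 sums_iff)
  qed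
qed

lemma
  assumes "sigma_algebra X \<Sigma>" and "positive_measure \<Sigma> \<mu>" and "countably_additive_measure \<Sigma> \<mu>"
  shows measure_real_measure: "E \<in> \<Sigma> \<Longrightarrow> measure (real_measure X \<Sigma> \<mu>) E = \<mu> E"
    and finite_measure_real_measure: "finite_measure (real_measure X \<Sigma> \<mu>)"
proof -
  interpret sigma_algebra X \<Sigma> by fact
  show "measure (real_measure X \<Sigma> \<mu>) E = \<mu> E" if "E \<in> \<Sigma>"
    using emeasure_real_measure[OF assms that] assms(2) that
    by (simp add: measure_def positive_measure_def)
  show "finite_measure (real_measure X \<Sigma> \<mu>)"
    using emeasure_real_measure[OF assms top] space_real_measure[OF assms(1)]
    by (intro finite_measureI) simp
qed

lemma ba_integral_eq_lebesgue_integral: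
  fixes f :: "'a \<Rightarrow> real"
  assumes "finite_measure M" and \<mu>: "\<And>E. E \<in> sets M \<Longrightarrow> \<mu> E = measure M E"
    and f: "f \<in> borel_measurable M" and bounded: "\<And>x. x \<in> space M \<Longrightarrow> \<bar>f x\<bar> \<le> B"
  shows "ba_integral (space M) (sets M) \<mu> f = integral\<^sup>L M f"
proof (rule ba_integral_eqI)
  show "\<exists>P t. fine_tagged_partition (space M) (sets M) f \<delta> P t" if "\<delta> > 0" for \<delta>
    using fine_tagged_partition_exists[OF f bounded that] .
  show "has_ba_integral (space M) (sets M) \<mu> f (integral\<^sup>L M f)"
    unfolding has_ba_integral_def
  proof (intro allI impI)
    fix \<epsilon> :: real assume "\<epsilon> > 0"
    define \<delta> where "\<delta> = \<epsilon> / (measure M (space M) + 1)"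
    have "\<delta> > 0"
      using \<open>\<epsilon> > 0\<close> unfolding \<delta>_def by (simp add: add_nonneg_pos)
    have "\<delta> * measure M (space M) < \<delta> * (measure M (space M) + 1)"
      using \<open>\<delta> > 0\<close> by simp
    also have "\<dots> = \<epsilon>"
    proof -
      have "measure M (space M) + 1 \<noteq> 0"
        using measure_nonneg[of M "space M"] by linarith
      then show ?thesis
        unfolding \<delta>_def by simp
    qed
    finally have \<delta>_small: "\<delta> * measure M (space M) < \<epsilon>" .
    show "\<exists>\<delta>>0. \<forall>P t. fine_tagged_partition (space M) (sets M) f \<delta> P t \<longrightarrow>
        \<bar>(\<Sum>E\<in>P. f (t E) * \<mu> E) - integral\<^sup>L M f\<bar> < \<epsilon>"
    proof (intro exI[of _ \<delta>] conjI allI impI)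
      fix P t assume fine: "fine_tagged_partition (space M) (sets M) f \<delta> P t"
      then have "P \<subseteq> sets M"
        by (simp add: fine_tagged_partition_def meas_partition_def)
      then have "(\<Sum>E\<in>P. f (t E) * \<mu> E) = (\<Sum>E\<in>P. f (t E) * measure M E)"
        using \<mu> by (intro sum.cong) auto
      then show "\<bar>(\<Sum>E\<in>P. f (t E) * \<mu> E) - integral\<^sup>L M f\<bar> < \<epsilon>"
        using tagged_sum_integral_dist[OF assms(1) f bounded fine] \<delta>_small by linarith
    qed fact
  qed
qed

lemma borel_measurable_transition_function:
  assumes "transition_function (space M) (sets M) p" and "E \<in> sets M"
  shows "(\<lambda>x. p x E) \<in> borel_measurable M"
  using assms unfolding transition_function_def borel_measurable_iff_le by blast

lemma markov_op_eq_integral: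
  assumes "finite_measure M" and "\<And>E. E \<in> sets M \<Longrightarrow> \<mu> E = measure M E"
    and p: "transition_function (space M) (sets M) p" and "E \<in> sets M"
  shows "markov_op (space M) (sets M) p \<mu> E = (\<integral>x. p x E \<partial>M)"
  unfolding markov_op_def
proof (rule ba_integral_eq_lebesgue_integral[OF assms(1,2)])
  show "(\<lambda>x. p x E) \<in> borel_measurable M"
    using borel_measurable_transition_function[OF p \<open>E \<in> sets M\<close>] .
  show "\<bar>p x E\<bar> \<le> 1" if "x \<in> space M" for x
    using p that \<open>E \<in> sets M\<close> unfolding transition_function_def by fastforce
qed

lemma countably_additive_integral_transition_function:
  assumes "finite_measure M" and p: "transition_function (space M) (sets M) p"
  shows "countably_additive_measure (sets M) (\<lambda>E. \<integral>x. p x E \<partial>M)"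
  unfolding countably_additive_measure_def
proof (intro allI impI)
  interpret finite_measure M by fact
  fix F :: "nat \<Rightarrow> 'a set" assume F: "range F \<subseteq> sets M" "disjoint_family F"
  then have F_sets: "F n \<in> sets M" for n
    by auto
  have U_sets: "(\<Union>n. F n) \<in> sets M"
    using F by auto
  have p01: "0 \<le> p x E" "p x E \<le> 1" if "x \<in> space M" "E \<in> sets M" for x E
    using p that unfolding transition_function_def by auto
  have p_sums: "(\<lambda>n. p x (F n)) sums p x (\<Union>n. F n)" if "x \<in> space M" for x
    using p that F unfolding transition_function_def countably_additive_measure_def by blast
  have meas: "(\<lambda>x. p x E) \<in> borel_measurable M" if "E \<in> sets M" for E
    using borel_measurable_transition_function[OF p that] .
  have partial_sums_bounded: "norm (\<Sum>n<N. p x (F n)) \<le> 1" if "x \<in> space M" for x N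
  proof -
    have "(\<Sum>n<N. p x (F n)) \<le> (\<Sum>n. p x (F n))"
      using p_sums[OF that] p01(1)[OF that F_sets] by (intro sum_le_suminf) (auto simp: sums_iff)
    also have "\<dots> = p x (\<Union>n. F n)"
      using p_sums[OF that] by (simp add: sums_iff)
    finally show ?thesis
      using p01[OF that F_sets] p01[OF that U_sets] by (simp add: sum_nonneg)
  qed
  have "(\<lambda>N. \<integral>x. (\<Sum>n<N. p x (F n)) \<partial>M) \<longlonglongrightarrow> (\<integral>x. p x (\<Union>n. F n) \<partial>M)"
  proof (rule integral_dominated_convergence[where w = "\<lambda>_. 1"])
    show "(\<lambda>x. \<Sum>n<N. p x (F n)) \<in> borel_measurable M" for N
      using meas[OF F_sets] by (rule borel_measurable_sum)
    show "AE x in M. (\<lambda>N. \<Sum>n<N. p x (F n)) \<longlonglongrightarrow> p x (\<Union>n. F n)"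
      using p_sums by (intro AE_I2) (simp add: sums_def)
    show "AE x in M. norm (\<Sum>n<N. p x (F n)) \<le> 1" for N
      using partial_sums_bounded by (intro AE_I2)
  qed (simp_all add: meas[OF U_sets])
  moreover have "(\<integral>x. (\<Sum>n<N. p x (F n)) \<partial>M) = (\<Sum>n<N. \<integral>x. p x (F n) \<partial>M)" for N
  proof (rule Bochner_Integration.integral_sum[where f = "\<lambda>n x. p x (F n)"])
    show "integrable M (\<lambda>x. p x (F n))" for n
      using meas[OF F_sets] p01[OF _ F_sets]
      by (intro integrable_const_bound[where B = 1] AE_I2) auto
  qed
  ultimately show "(\<lambda>n. \<integral>x. p x (F n) \<partial>M) sums (\<integral>x. p x (\<Union>n. F n) \<partial>M)"
    unfolding sums_def by simp
qed

lemma countably_additive_measure_meas_eq: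
  assumes "sigma_algebra X \<Sigma>" and "meas_eq \<Sigma> \<mu> \<nu>" and "countably_additive_measure \<Sigma> \<mu>"
  shows "countably_additive_measure \<Sigma> \<nu>"
  unfolding countably_additive_measure_def
proof (intro allI impI)
  fix F :: "nat \<Rightarrow> _" assume F: "range F \<subseteq> \<Sigma>" "disjoint_family F"
  then have "(\<Union>n. F n) \<in> \<Sigma>"
    using assms(1) by (simp add: sigma_algebra.countable_UN)
  moreover have "(\<lambda>n. \<mu> (F n)) sums \<mu> (\<Union>n. F n)"
    using assms(3) F unfolding countably_additive_measure_def by blast
  moreover have "\<mu> (F n) = \<nu> (F n)" for n
    using assms(2) F unfolding meas_eq_def by auto
  ultimately show "(\<lambda>n. \<nu> (F n)) sums \<nu> (\<Union>n. F n)"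
    using assms(2) unfolding meas_eq_def by simp
qed

lemma markov_op_countably_additive:
  assumes "sigma_algebra X \<Sigma>" and p: "transition_function X \<Sigma> p"
    and "positive_measure \<Sigma> \<mu>" and "countably_additive_measure \<Sigma> \<mu>"
  shows "countably_additive_measure \<Sigma> (markov_op X \<Sigma> p \<mu>)"
proof -
  define M where "M = real_measure X \<Sigma> \<mu>"
  have space_M: "space M = X" and sets_M: "sets M = \<Sigma>"
    unfolding M_def using assms(1) by (simp_all add: space_real_measure sets_real_measure)
  have "finite_measure M"
    unfolding M_def using assms(1,3,4) by (rule finite_measure_real_measure)
  have \<mu>: "\<mu> E = measure M E" if "E \<in> sets M" for E
    using that measure_real_measure[OF assms(1,3,4), of E] sets_M by (simp add: M_def)
  have p': "transition_function (space M) (sets M) p"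
    using p by (simp add: space_M sets_M)
  have "countably_additive_measure (sets M) (\<lambda>E. \<integral>x. p x E \<partial>M)"
    by (rule countably_additive_integral_transition_function[OF \<open>finite_measure M\<close> p'])
  moreover have "meas_eq (sets M) (\<lambda>E. \<integral>x. p x E \<partial>M) (markov_op (space M) (sets M) p \<mu>)"
    unfolding meas_eq_def using markov_op_eq_integral[OF \<open>finite_measure M\<close> \<mu> p'] by simp
  ultimately show ?thesis
    using countably_additive_measure_meas_eq[OF assms(1)] by (simp add: space_M sets_M)
qed

lemma cycle_induct:
  fixes Q :: "nat \<Rightarrow> bool"
  assumes "\<And>i. i \<in> {1..<m} \<Longrightarrow> Q i \<Longrightarrow> Q (Suc i)" and wrap: "Q m \<Longrightarrow> Q 1"
    and "i \<in> {1..m}" and "Q i"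
  shows "\<forall>j\<in>{1..m}. Q j"
proof -
  have forward: "Q j" if "k \<le> j" "j \<le> m" "1 \<le> k" "Q k" for j k
    using that(1,2)
  proof (induction j rule: dec_induct)
    case (step n)
    then show ?case using assms(1) \<open>1 \<le> k\<close> by simp
  qed (simp add: \<open>Q k\<close>)
  have "Q 1"
    using wrap forward[of i m] assms(3,4) by simp
  then show ?thesis
    using forward[of 1] by simp
qed

lemma countably_additive_mean_measure:
  assumes "\<forall>k\<in>{1..m}. countably_additive_measure \<Sigma> (\<mu> k)"
  shows "countably_additive_measure \<Sigma> (mean_measure m \<mu>)"
  unfolding countably_additive_measure_def mean_measure_def
proof (intro allI impI)
  fix F :: "nat \<Rightarrow> _" assume "range F \<subseteq> \<Sigma>" "disjoint_family F"
  then have "(\<lambda>n. \<Sum>k=1..m. \<mu> k (F n)) sums (\<Sum>k=1..m. \<mu> k (\<Union>n. F n))"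
    using assms unfolding countably_additive_measure_def by (intro sums_sum) auto
  then show "(\<lambda>n. (\<Sum>k=1..m. \<mu> k (F n)) / real m) sums ((\<Sum>k=1..m. \<mu> k (\<Union>n. F n)) / real m)"
    by (rule sums_divide)
qed

theorem theorem4p2:
  fixes X :: "'a set" and \<Sigma> :: "'a set set" and p :: "'a \<Rightarrow> 'a set \<Rightarrow> real"
    and m :: nat and \<mu> :: "nat \<Rightarrow> 'a set \<Rightarrow> real"
  assumes "infinite X"
    and "sigma_algebra X \<Sigma>"
    and "\<forall>x\<in>X. {x} \<in> \<Sigma>"
    and "transition_function X \<Sigma> p"
    and "measure_cycle X \<Sigma> p m \<mu>"
    and "\<exists>i\<in>{1..m}. countably_additive_measure \<Sigma> (\<mu> i)"
  shows "(\<forall>i\<in>{1..m}. countably_additive_measure \<Sigma> (\<mu> i))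
         \<and> countably_additive_measure \<Sigma> (mean_measure m \<mu>)"
proof -
  obtain i where "i \<in> {1..m}" "countably_additive_measure \<Sigma> (\<mu> i)"
    using assms(6) by blast
  have cycle: "\<forall>i\<in>{1..m}. positive_measure \<Sigma> (\<mu> i)"
    "\<forall>i\<in>{1..<m}. meas_eq \<Sigma> (markov_op X \<Sigma> p (\<mu> i)) (\<mu> (Suc i))"
    "meas_eq \<Sigma> (markov_op X \<Sigma> p (\<mu> m)) (\<mu> 1)"
    using assms(5) unfolding measure_cycle_def by blast+
  have image_ca: "countably_additive_measure \<Sigma> \<nu>"
    if "j \<in> {1..m}" "meas_eq \<Sigma> (markov_op X \<Sigma> p (\<mu> j)) \<nu>"
      "countably_additive_measure \<Sigma> (\<mu> j)" for j \<nu>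
    using markov_op_countably_additive[OF assms(2,4)] cycle(1) that
      countably_additive_measure_meas_eq[OF assms(2) that(2)] by blast
  have "\<forall>j\<in>{1..m}. countably_additive_measure \<Sigma> (\<mu> j)"
  proof (rule cycle_induct)
    show "countably_additive_measure \<Sigma> (\<mu> (Suc j))"
      if "j \<in> {1..<m}" "countably_additive_measure \<Sigma> (\<mu> j)" for j
      using image_ca[of j "\<mu> (Suc j)"] cycle(2) that by simp
    show "countably_additive_measure \<Sigma> (\<mu> 1)" if "countably_additive_measure \<Sigma> (\<mu> m)"
      using image_ca[of m "\<mu> 1"] cycle(3) that \<open>i \<in> {1..m}\<close> by simp
  qed fact+
  then show ?thesis
    using countably_additive_mean_measure by blast
qed

end
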